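(* Let $G$ be a group and let $S_1,\dots,S_m\subset F$ be finitely many subsets such that each $S_i$ is a set of weak identities in $G$ of height $n_i$. Then $\bigcup_{i=1}^m S_i$ is a set of weak identities in $G$ of height at most $\sum_{i=1}^m n_i$ (i.e. the defining property holds with $N=\sum_i n_i$).
   Context: Let $F$ be the free group on countably many generators $g_1,g_2,\dots$. For $N\ge1$, $F^{\times N}$ is the direct product of $N$ copies of $F$, $i_k:F\to F^{\times N}$ the $k$-th inclusion. A subset $S\subset F$ is a set of weak identities in $G$ of height $N$ if for any $s_1,\dots,s_N\in S$ and any homomorphism $\rho:F^{\times N}\to G$ there is $k\in\{1,\dots,N\}$ with $\rho(i_k(s_k))=1$; $S$ is a set of weak identities if this holds for some $N\ge1$. *)

theory Defs
  imports "HOL-Algebra.Algebra"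
begin

text \<open>The free group F on countably many generators g_1, g_2, ... realised as
  freely reduced words over letters (i, b) :: nat \<times> bool; (i, True) stands for
  the generator g_i and (i, False) for its inverse.\<close>

type_synonym fword = "(nat \<times> bool) list"

definition letter_inv :: "nat \<times> bool \<Rightarrow> nat \<times> bool" where
  "letter_inv x = (fst x, \<not> snd x)"

definition reduced_word :: "fword \<Rightarrow> bool" where
  "reduced_word w \<longleftrightarrow> (\<forall>i. Suc i < length w \<longrightarrow> w ! Suc i \<noteq> letter_inv (w ! i))"

fun red_cons :: "nat \<times> bool \<Rightarrow> fword \<Rightarrow> fword" where
  "red_cons x [] = [x]"
| "red_cons x (y # ys) = (if y = letter_inv x then ys else x # y # ys)"

definition reduce_word :: "fword \<Rightarrow> fword" where
  "reduce_word w = foldr red_cons w []"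

definition free_group :: "fword monoid" where
  "free_group = \<lparr>carrier = {w. reduced_word w},
                 monoid.mult = (\<lambda>x y. reduce_word (x @ y)),
                 one = []\<rparr>"

definition free_power :: "nat \<Rightarrow> (nat \<Rightarrow> fword) monoid" where
  "free_power N = product_group {1..N} (\<lambda>_. free_group)"

definition incl :: "nat \<Rightarrow> nat \<Rightarrow> fword \<Rightarrow> (nat \<Rightarrow> fword)" where
  "incl N k s = (\<lambda>j\<in>{1..N}. if j = k then s else [])"

definition weak_identities_height :: "('g, 'c) monoid_scheme \<Rightarrow> fword set \<Rightarrow> nat \<Rightarrow> bool" where
  "weak_identities_height G S N \<longleftrightarrow> 1 \<le> N \<and>
     (\<forall>s. (\<forall>k\<in>{1..N}. s k \<in> S) \<longrightarrow>
        (\<forall>\<rho> \<in> hom (free_power N) G. \<exists>k\<in>{1..N}. \<rho> (incl N k (s k)) = \<one>\<^bsub>G\<^esub>))"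

end

theory Submission
  imports Defs
begin

text \<open>A tuple of length \<open>N = n\<^sub>1 + \<dots> + n\<^sub>m\<close> with entries in the union of the \<open>S\<^sub>i\<close>
  has, by the pigeonhole principle, at least \<open>n\<^sub>i\<close> entries in some \<open>S\<^sub>i\<close>. Precomposing \<open>\<rho>\<close>
  with the embedding of \<open>F\<^bsup>n\<^sub>i\<^esup>\<close> into \<open>F\<^sup>N\<close> onto these coordinates gives a homomorphism
  to which the height-\<open>n\<^sub>i\<close> property of \<open>S\<^sub>i\<close> applies.\<close>

lemma card_UN_pigeonhole:
  assumes "finite I" "I \<noteq> {}" "(\<Sum>i\<in>I. n i) \<le> card (\<Union>i\<in>I. A i)"
  shows "\<exists>i\<in>I. n i \<le> card (A i)"
proof (rule ccontr)
  assume "\<not> ?thesis"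
  then have "(\<Sum>i\<in>I. card (A i)) < (\<Sum>i\<in>I. n i)"
    using assms(1,2) by (intro sum_strict_mono) (auto simp: not_le)
  also have "\<dots> \<le> card (\<Union>i\<in>I. A i)" by (fact assms(3))
  also have "\<dots> \<le> (\<Sum>i\<in>I. card (A i))" using assms(1) by (rule card_UN_le)
  finally show False by (rule less_irrefl[THEN notE])
qed

lemma weak_identities_heightI:
  assumes "1 \<le> N"
    and "\<And>s \<rho>. \<forall>k\<in>{1..N}. s k \<in> S \<Longrightarrow> \<rho> \<in> hom (free_power N) G \<Longrightarrow>
      \<exists>k\<in>{1..N}. \<rho> (incl N k (s k)) = \<one>\<^bsub>G\<^esub>"
  shows "weak_identities_height G S N"
  using assms unfolding weak_identities_height_def by blast

lemma weak_identities_heightD: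
  assumes "weak_identities_height G S N" "\<forall>k\<in>{1..N}. s k \<in> S" "\<rho> \<in> hom (free_power N) G"
  shows "\<exists>k\<in>{1..N}. \<rho> (incl N k (s k)) = \<one>\<^bsub>G\<^esub>"
  using assms unfolding weak_identities_height_def by blast

definition free_power_embed :: "nat \<Rightarrow> nat \<Rightarrow> (nat \<Rightarrow> nat) \<Rightarrow> (nat \<Rightarrow> fword) \<Rightarrow> (nat \<Rightarrow> fword)"
  where "free_power_embed n N e f =
    (\<lambda>j\<in>{1..N}. if j \<in> e ` {1..n} then f (inv_into {1..n} e j) else [])"

lemma free_power_embed_hom:
  assumes "inj_on e {1..n}" "e ` {1..n} \<subseteq> {1..N}"
  shows "free_power_embed n N e \<in> hom (free_power n) (free_power N)"
proof (rule homI)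
  fix f assume "f \<in> carrier (free_power n)"
  then show "free_power_embed n N e f \<in> carrier (free_power N)"
    by (auto simp: free_power_def free_power_embed_def free_group_def reduced_word_def PiE_iff
        intro!: inv_into_into)
next
  have "reduce_word [] = []" by (simp add: reduce_word_def)
  then show "free_power_embed n N e (f \<otimes>\<^bsub>free_power n\<^esub> g) =
      free_power_embed n N e f \<otimes>\<^bsub>free_power N\<^esub> free_power_embed n N e g" for f g
    using inv_into_into[of _ e "{1..n}"]
    by (auto simp: free_power_def free_power_embed_def free_group_def fun_eq_iff)
qed

lemma free_power_embed_incl:
  assumes "inj_on e {1..n}" "e ` {1..n} \<subseteq> {1..N}" "k \<in> {1..n}"
  shows "free_power_embed n N e (incl n k x) = incl N (e k) x"
  using assms inv_into_f_f[OF assms(1)]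
  by (auto simp: free_power_embed_def incl_def fun_eq_iff intro!: inv_into_into)

lemma weak_identities_height_on_coordinates:
  assumes S: "weak_identities_height G S n"
    and \<rho>: "\<rho> \<in> hom (free_power N) G"
    and A: "A \<subseteq> {1..N}" "n \<le> card A"
    and s: "\<And>k. k \<in> A \<Longrightarrow> s k \<in> S"
  shows "\<exists>k\<in>A. \<rho> (incl N k (s k)) = \<one>\<^bsub>G\<^esub>"
proof -
  have "finite A" using A(1) finite_subset by blast
  then obtain e where e: "inj_on e {1..n}" "e ` {1..n} \<subseteq> A"
    using card_le_inj[of "{1..n}" A] A(2) by auto
  then have eN: "e ` {1..n} \<subseteq> {1..N}" using A(1) by blast
  have se: "\<forall>k\<in>{1..n}. s (e k) \<in> S" using e(2) s by blast
  have "\<rho> \<circ> free_power_embed n N e \<in> hom (free_power n) G"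
    using free_power_embed_hom[OF e(1) eN] \<rho> by (rule hom_compose)
  from weak_identities_heightD[OF S se this] obtain k where k: "k \<in> {1..n}"
      "(\<rho> \<circ> free_power_embed n N e) (incl n k (s (e k))) = \<one>\<^bsub>G\<^esub>" ..
  then have "\<rho> (incl N (e k) (s (e k))) = \<one>\<^bsub>G\<^esub>"
    by (simp add: free_power_embed_incl[OF e(1) eN k(1)])
  then show ?thesis using e(2) k(1) by blast
qed

theorem corollary2p3:
  fixes G :: "('g, 'c) monoid_scheme"
    and m :: nat
    and S :: "nat \<Rightarrow> fword set"
    and n :: "nat \<Rightarrow> nat"
  assumes "group G"
    and "1 \<le> m"
    and "\<And>i. i \<in> {1..m} \<Longrightarrow> S i \<subseteq> carrier free_group"
    and "\<And>i. i \<in> {1..m} \<Longrightarrow> weak_identities_height G (S i) (n i)"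
  shows "weak_identities_height G (\<Union>i\<in>{1..m}. S i) (\<Sum>i=1..m. n i)"
proof -
  define N where "N = (\<Sum>i=1..m. n i)"
  have "1 \<le> n 1" using assms(2,4) by (simp add: weak_identities_height_def)
  also have "n 1 \<le> N" unfolding N_def using assms(2) by (intro member_le_sum) auto
  finally have "1 \<le> N" .
  then have "weak_identities_height G (\<Union>i\<in>{1..m}. S i) N"
  proof (rule weak_identities_heightI)
    fix s \<rho>
    assume s: "\<forall>k\<in>{1..N}. s k \<in> (\<Union>i\<in>{1..m}. S i)" and \<rho>: "\<rho> \<in> hom (free_power N) G"
    define A where "A i = {k\<in>{1..N}. s k \<in> S i}" for i
    have "(\<Union>i\<in>{1..m}. A i) = {1..N}" using s by (auto simp: A_def)
    then have "(\<Sum>i\<in>{1..m}. n i) \<le> card (\<Union>i\<in>{1..m}. A i)" by (simp add: N_def)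
    moreover have "{1..m} \<noteq> {}" using assms(2) by simp
    ultimately obtain i where i: "i \<in> {1..m}" "n i \<le> card (A i)"
      using card_UN_pigeonhole[of "{1..m}" n A] by blast
    have "A i \<subseteq> {1..N}" "\<And>k. k \<in> A i \<Longrightarrow> s k \<in> S i" by (auto simp: A_def)
    then obtain k where "k \<in> A i" "\<rho> (incl N k (s k)) = \<one>\<^bsub>G\<^esub>"
      using weak_identities_height_on_coordinates[OF assms(4)[OF i(1)] \<rho>, of "A i" s] i(2) by blast
    then show "\<exists>k\<in>{1..N}. \<rho> (incl N k (s k)) = \<one>\<^bsub>G\<^esub>" by (auto simp: A_def)
  qed
  then show ?thesis by (simp only: N_def)
qed

end
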